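(* Let $d$ be an even positive integer and $s$ a positive integer with $2s\leqslant d$, and let $k\in\{1,2,\ldots,s-1\}$. Then the indexed family $\{B_\varepsilon\colon \varepsilon\in I^s,\ |\varepsilon|=k\}$ defines a partition of $X_k$; that is, the union of its members is $X_k$ and $B_\varepsilon\cap B_\gamma=\emptyset$ whenever $\varepsilon\neq\gamma$ (empty members allowed).
   Context: Let $I=\{0,1\}$; for a binary vector $x$ let $|x|=\sum_i x_i$. Let $\alpha=(0,\ldots,0)$, $\omega=(1,\ldots,1)\in I^s$. For $\varepsilon\in I^s\setminus\{\alpha,\omega\}$ let $i=t(\varepsilon)$ be the unique index with $\varepsilon_i\neq\varepsilon_{i+1}=\cdots=\varepsilon_s$, and $A_\varepsilon=\{\varepsilon_1\}\times\cdots\times\{\varepsilon_i\}\times I^{s-1-i}\subseteq I^{s-1}$. Define subsets of $I^{d-s}$: $X_0=\{x\colon |x|\leqslant \frac d2-s\}$; $X_k=\{x\colon |x|=\frac d2-s+k\}$ for $0<k<s$; $X_s=\{x\colon |x|\geqslant \frac d2\}$. Writing $x\in I^{d-s}$ as $x=(x',x'')\in I^{d-2s+1}\times I^{s-1}$, for $\varepsilon\in I^s\setminus\{\alpha,\omega\}$ set $B_\varepsilon=\{x=(x',x'')\in X_{|\varepsilon|}\colon x''\in A_\varepsilon\}=X_{|\varepsilon|}\cap(I^{d-2s+1}\times A_\varepsilon)$. *)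

theory Defs
  imports Main
begin

text \<open>Binary vectors in I^n are lists of naturals of length n with entries in {0,1};
  the i-th coordinate (1-based, as in the paper) is  x ! (i-1).\<close>

definition binvecs :: "nat \<Rightarrow> nat list set" where
  "binvecs n = {x. length x = n \<and> set x \<subseteq> {0,1}}"

definition wt :: "nat list \<Rightarrow> nat" where
  "wt x = sum_list x"

definition tidx :: "nat list \<Rightarrow> nat" where
  "tidx eps = (THE i. 1 \<le> i \<and> i < length eps \<and> eps ! (i - 1) \<noteq> eps ! i \<and>
      (\<forall>j. i \<le> j \<and> j < length eps \<longrightarrow> eps ! j = eps ! (length eps - 1)))"

text \<open>A_eps = {eps_1} x ... x {eps_i} x I^(s-1-i), a subset of I^(s-1), where s = length eps.\<close>
definition Aset :: "nat list \<Rightarrow> nat list set" where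
  "Aset eps = {y \<in> binvecs (length eps - 1). take (tidx eps) y = take (tidx eps) eps}"

text \<open>The sets X_k \<subseteq> I^(d-s), for d even and 2s \<le> d (so d/2 - s is a natural number).\<close>
definition Xset :: "nat \<Rightarrow> nat \<Rightarrow> nat \<Rightarrow> nat list set" where
  "Xset d s k =
     (if k = 0 then {x \<in> binvecs (d - s). wt x \<le> d div 2 - s}
      else if k < s then {x \<in> binvecs (d - s). wt x = d div 2 - s + k}
      else {x \<in> binvecs (d - s). wt x \<ge> d div 2})"

text \<open>B_eps = {x = (x',x'') \<in> X_|eps| : x'' \<in> A_eps}, with x' \<in> I^(d-2s+1), x'' \<in> I^(s-1).\<close>
definition Bset :: "nat \<Rightarrow> nat \<Rightarrow> nat list \<Rightarrow> nat list set" where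
  "Bset d s eps = {x \<in> Xset d s (wt eps). drop (d - 2 * s + 1) x \<in> Aset eps}"

end

theory Submission
  imports Defs
begin

text \<open>A non-constant \<open>\<epsilon> \<in> I\<^sup>s\<close> with \<open>t(\<epsilon>) = i\<close> is determined by its first \<open>i\<close>
  coordinates: after them it is constantly \<open>1 - \<epsilon>\<^sub>i\<close>. Hence \<open>y \<in> A\<^sub>\<epsilon>\<close> says exactly that
  \<open>\<epsilon>\<close> arises from \<open>y \<in> I^(s-1)\<close> by keeping \<open>y\<^sub>1, \<dots>, y\<^sub>i\<close> and filling up with \<open>1 - y\<^sub>i\<close>,
  for some \<open>1 \<le> i < s\<close>. If \<open>S(n)\<close> counts the ones among \<open>y\<^sub>1, \<dots>, y\<^sub>n\<close>, this vector has
  weight \<open>S(i)\<close> if \<open>y\<^sub>i = 1\<close> and \<open>S(i) + s - i\<close> if \<open>y\<^sub>i = 0\<close>, a value in \<open>{1, \<dots>, s-1}\<close>.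
  For \<open>i < j\<close> we have \<open>S(i) \<le> S(j-1) \<le> S(i) + (j-1-i)\<close>, so the weight at \<open>j\<close> is larger
  than at \<open>i\<close> when \<open>y\<^sub>i = 1\<close> and smaller when \<open>y\<^sub>i = 0\<close>. Thus \<open>i \<mapsto> weight\<close> is an injection
  of \<open>{1, \<dots>, s-1}\<close> into itself, hence a bijection, and every \<open>x \<in> X\<^sub>k\<close> lies in \<open>B\<^sub>\<epsilon>\<close> for
  exactly one \<open>\<epsilon>\<close> of weight \<open>k\<close>, the one built from the tail \<open>x''\<close> of \<open>x\<close>.\<close>

lemma sum_list_le_length_bin: "set z \<subseteq> {0,1} \<Longrightarrow> sum_list z \<le> length (z::nat list)"
  by (induction z) auto

lemma sum_list_take_bin_bounds:
  fixes y :: "nat list"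
  assumes "set y \<subseteq> {0,1}" "m \<le> n"
  shows "sum_list (take m y) \<le> sum_list (take n y)"
    and "sum_list (take n y) \<le> sum_list (take m y) + (n - m)"
proof -
  have split: "sum_list (take n y) = sum_list (take m y) + sum_list (take (n - m) (drop m y))"
  proof -
    have "take n y = take m y @ take (n - m) (drop m y)"
      using take_add[of m "n - m" y] assms(2) by simp
    then show ?thesis by simp
  qed
  have "set (take (n - m) (drop m y)) \<subseteq> {0,1}"
    using assms(1) by (meson in_set_dropD in_set_takeD subset_iff)
  then have "sum_list (take (n - m) (drop m y)) \<le> n - m"
    using sum_list_le_length_bin[of "take (n - m) (drop m y)"] by simp
  then show "sum_list (take m y) \<le> sum_list (take n y)"
    and "sum_list (take n y) \<le> sum_list (take m y) + (n - m)"
    using split by linarith+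
qed

lemma tidx_eqI:
  assumes "1 \<le> i" "i < length eps" "eps ! (i - 1) \<noteq> eps ! i"
    and "\<And>j. i \<le> j \<Longrightarrow> j < length eps \<Longrightarrow> eps ! j = eps ! (length eps - 1)"
  shows "tidx eps = i"
  unfolding tidx_def
proof (rule the_equality)
  show "1 \<le> i \<and> i < length eps \<and> eps ! (i - 1) \<noteq> eps ! i \<and>
    (\<forall>j. i \<le> j \<and> j < length eps \<longrightarrow> eps ! j = eps ! (length eps - 1))"
    using assms by blast
next
  fix i'
  assume "1 \<le> i' \<and> i' < length eps \<and> eps ! (i' - 1) \<noteq> eps ! i' \<and>
    (\<forall>j. i' \<le> j \<and> j < length eps \<longrightarrow> eps ! j = eps ! (length eps - 1))"
  then have i': "1 \<le> i'" "i' < length eps" "eps ! (i' - 1) \<noteq> eps ! i'"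
    and tail': "\<And>j. i' \<le> j \<Longrightarrow> j < length eps \<Longrightarrow> eps ! j = eps ! (length eps - 1)"
    by blast+
  show "i' = i"
  proof (rule linorder_cases)
    assume "i' < i"
    then have "i' \<le> i - 1" "i - 1 < length eps" "i' \<le> i" using assms(2) by linarith+
    then have "eps ! (i - 1) = eps ! (length eps - 1)" "eps ! i = eps ! (length eps - 1)"
      using tail' assms(2) by blast+
    with assms(3) show ?thesis by argo
  next
    assume "i < i'"
    then have "i \<le> i' - 1" "i' - 1 < length eps" "i \<le> i'" using i'(2) by linarith+
    then have "eps ! (i' - 1) = eps ! (length eps - 1)" "eps ! i' = eps ! (length eps - 1)"
      using assms(4) i'(2) by blast+
    with i'(3) show ?thesis by argo
  qed
qed

lemma tidx_spec:
  assumes "j < length eps" "eps ! j \<noteq> eps ! (length eps - 1)"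
  shows "1 \<le> tidx eps" "tidx eps < length eps" "eps ! (tidx eps - 1) \<noteq> eps ! tidx eps"
    and "\<And>j. tidx eps \<le> j \<Longrightarrow> j < length eps \<Longrightarrow> eps ! j = eps ! (length eps - 1)"
proof -
  define c where "c = eps ! (length eps - 1)"
  define D where "D = {j. j < length eps \<and> eps ! j \<noteq> c}"
  define i where "i = Suc (Max D)"
  have D_iff: "j' \<in> D \<longleftrightarrow> j' < length eps \<and> eps ! j' \<noteq> c" for j'
    unfolding D_def by simp
  have fin: "finite D" unfolding D_def by simp
  moreover have "j \<in> D" using assms unfolding D_iff c_def by simp
  ultimately have Max_mem: "Max D \<in> D" by (intro Max_in) auto
  have above_Max: "j' \<notin> D" if "Max D < j'" for j'
    using Max_ge[OF fin, of j'] that by linarith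
  from Max_mem have "Max D < length eps" "eps ! (i - 1) \<noteq> c"
    unfolding D_iff i_def by simp_all
  moreover have "Max D \<noteq> length eps - 1"
    using \<open>eps ! (i - 1) \<noteq> c\<close> unfolding i_def c_def by auto
  ultimately have i: "1 \<le> i" "i < length eps" "eps ! (i - 1) \<noteq> c"
    unfolding i_def by linarith+
  have tail: "eps ! j = c" if "i \<le> j" "j < length eps" for j
    using above_Max[of j] that unfolding D_iff i_def by simp
  have tail': "eps ! j = eps ! (length eps - 1)" if "i \<le> j" "j < length eps" for j
  proof -
    have "i \<le> length eps - 1" "length eps - 1 < length eps" using i(2) by linarith+
    from tail[OF this] tail[OF that] show ?thesis by simp
  qed
  have "eps ! (i - 1) \<noteq> eps ! i" using i tail[of i] by simp
  then have "tidx eps = i" using i tail' by (intro tidx_eqI)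
  then show "1 \<le> tidx eps" "tidx eps < length eps" "eps ! (tidx eps - 1) \<noteq> eps ! tidx eps"
    and "\<And>j. tidx eps \<le> j \<Longrightarrow> j < length eps \<Longrightarrow> eps ! j = eps ! (length eps - 1)"
    using i \<open>eps ! (i - 1) \<noteq> eps ! i\<close> tail' by blast+
qed

text \<open>For \<open>y \<in> I^(s-1)\<close> and \<open>1 \<le> i < s\<close>, the unique \<open>\<epsilon>\<close> with \<open>t(\<epsilon>) = i\<close> and \<open>y \<in> A\<^sub>\<epsilon>\<close>.\<close>

definition prefix_flip :: "nat \<Rightarrow> nat list \<Rightarrow> nat \<Rightarrow> nat list" where
  "prefix_flip s y i = take i y @ replicate (s - i) (1 - y ! (i - 1))"

lemma prefix_flip_nth:
  assumes "i \<le> length y"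
  shows "j < i \<Longrightarrow> prefix_flip s y i ! j = y ! j"
    and "i \<le> j \<Longrightarrow> j < s \<Longrightarrow> prefix_flip s y i ! j = 1 - y ! (i - 1)"
  using assms by (auto simp: prefix_flip_def nth_append)

lemma length_prefix_flip: "i \<le> length y \<Longrightarrow> i \<le> s \<Longrightarrow> length (prefix_flip s y i) = s"
  by (simp add: prefix_flip_def)

lemma prefix_flip_in_binvecs:
  assumes "set y \<subseteq> {0,1}" "i \<le> length y" "i \<le> s"
  shows "prefix_flip s y i \<in> binvecs s"
proof -
  have "set (prefix_flip s y i) \<subseteq> set (take i y) \<union> {1 - y ! (i - 1)}"
    by (auto simp: prefix_flip_def)
  moreover have "set (take i y) \<subseteq> {0,1}" by (rule order_trans[OF set_take_subset assms(1)])
  moreover have "1 - y ! (i - 1) \<in> {0,1}" by (cases "y ! (i - 1)") auto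
  ultimately have "set (prefix_flip s y i) \<subseteq> {0,1}" by blast
  then show ?thesis using assms(2,3) by (simp add: binvecs_def length_prefix_flip)
qed

lemma tidx_prefix_flip:
  assumes "set y \<subseteq> {0,1}" "1 \<le> i" "i < s" "i \<le> length y"
  shows "tidx (prefix_flip s y i) = i"
proof -
  let ?e = "prefix_flip s y i"
  have len: "length ?e = s" using assms(3,4) by (simp add: length_prefix_flip)
  have tail: "?e ! j = 1 - y ! (i - 1)" if "i \<le> j" "j < s" for j
    using prefix_flip_nth(2)[OF assms(4) that] .
  have "?e ! (i - 1) = y ! (i - 1)"
    using prefix_flip_nth(1)[OF assms(4)] assms(2) by simp
  moreover have "y ! (i - 1) \<in> {0,1}" using assms(1,2,4) by (simp add: subset_iff)
  ultimately have jump: "?e ! (i - 1) \<noteq> ?e ! i" using tail[of i] assms(3) by auto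
  have const: "?e ! j = ?e ! (length ?e - 1)" if "i \<le> j" "j < length ?e" for j
    using tail[of j] tail[of "s - 1"] that assms(3) len by simp
  have "i < length ?e" using assms(3) len by simp
  from tidx_eqI[OF assms(2) this jump const] show ?thesis .
qed

lemma nonconstant_if_wt_between:
  assumes "eps \<in> binvecs s" "0 < wt eps" "wt eps < s"
  obtains j where "j < length eps" "eps ! j \<noteq> eps ! (length eps - 1)"
proof -
  let ?c = "eps ! (length eps - 1)"
  have len: "length eps = s" and bin: "set eps \<subseteq> {0,1}" using assms(1) by (auto simp: binvecs_def)
  have "s > 0" using assms(2,3) by linarith
  then have "?c \<in> {0,1}" using len bin by (simp add: subset_iff)
  have "\<exists>j < length eps. eps ! j \<noteq> ?c"
  proof (rule ccontr)
    assume "\<not> ?thesis"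
    then have "eps = replicate s ?c"
      using len by (intro replicate_eqI) (auto simp: in_set_conv_nth)
    then have "wt eps = wt (replicate s ?c)" by (rule arg_cong)
    then have "wt eps = s * ?c" by (simp add: wt_def sum_list_replicate)
    with \<open>?c \<in> {0,1}\<close> assms(2,3) show False by auto
  qed
  then show ?thesis using that by blast
qed

lemma prefix_flip_tidx:
  assumes "eps \<in> binvecs s" "0 < wt eps" "wt eps < s"
  shows "1 \<le> tidx eps" "tidx eps < s" "prefix_flip s eps (tidx eps) = eps"
proof -
  let ?i = "tidx eps"
  have len: "length eps = s" and bin: "set eps \<subseteq> {0,1}" using assms(1) by (auto simp: binvecs_def)
  obtain j where "j < length eps" "eps ! j \<noteq> eps ! (length eps - 1)"
    using nonconstant_if_wt_between[OF assms] .
  note spec = tidx_spec[OF this]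
  show i: "1 \<le> ?i" "?i < s" using spec(1,2) len by simp_all
  have "eps ! (?i - 1) \<in> {0,1}" "eps ! ?i \<in> {0,1}" using i len bin by (simp_all add: subset_iff)
  then have flip: "eps ! ?i = 1 - eps ! (?i - 1)" using spec(3) by auto
  show "prefix_flip s eps ?i = eps"
  proof (rule nth_equalityI)
    show "length (prefix_flip s eps ?i) = length eps" using i len by (simp add: length_prefix_flip)
    fix j assume "j < length (prefix_flip s eps ?i)"
    then have "j < s" using i len by (simp add: length_prefix_flip)
    show "prefix_flip s eps ?i ! j = eps ! j"
    proof (cases "j < ?i")
      case False
      then have "eps ! j = eps ! ?i"
        using spec(4)[of j] spec(4)[of ?i] \<open>j < s\<close> i len by simp
      then show ?thesis using prefix_flip_nth(2)[of ?i eps j s] False \<open>j < s\<close> i len flip by simp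
    qed (use prefix_flip_nth(1) i len in simp)
  qed
qed

lemma prefix_flip_cong:
  assumes "take i y = take i z" "1 \<le> i" "i \<le> length y" "i \<le> length z"
  shows "prefix_flip s y i = prefix_flip s z i"
proof -
  have "y ! (i - 1) = z ! (i - 1)"
    using arg_cong[OF assms(1), of "\<lambda>xs. xs ! (i - 1)"] assms(2) by simp
  then show ?thesis using assms(1) by (simp add: prefix_flip_def)
qed

lemma mem_Aset_iff_prefix_flip:
  assumes "y \<in> binvecs (s - 1)" "eps \<in> binvecs s" "0 < wt eps" "wt eps < s"
  shows "y \<in> Aset eps \<longleftrightarrow> (\<exists>i \<in> {1..<s}. eps = prefix_flip s y i)"
proof -
  have len: "length eps = s" "length y = s - 1" and bin: "set y \<subseteq> {0,1}"
    using assms(1,2) by (auto simp: binvecs_def)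
  note t = prefix_flip_tidx[OF assms(2-4)]
  show ?thesis
  proof
    assume "y \<in> Aset eps"
    then have "take (tidx eps) eps = take (tidx eps) y" by (simp add: Aset_def)
    then have "prefix_flip s eps (tidx eps) = prefix_flip s y (tidx eps)"
      using t len by (intro prefix_flip_cong) simp_all
    then show "\<exists>i \<in> {1..<s}. eps = prefix_flip s y i" using t by auto
  next
    assume "\<exists>i \<in> {1..<s}. eps = prefix_flip s y i"
    then obtain i where "i \<in> {1..<s}" and eps: "eps = prefix_flip s y i" by blast
    then have i: "1 \<le> i" "i < s" "i \<le> length y" using len by auto
    have "tidx eps = i" using tidx_prefix_flip[OF bin i] eps by simp
    moreover have "take i eps = take i y" using eps i by (simp add: prefix_flip_def)
    ultimately show "y \<in> Aset eps" using assms(1) len by (simp add: Aset_def)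
  qed
qed

lemma wt_prefix_flip:
  assumes "set y \<subseteq> {0,1}" "1 \<le> i" "i \<le> length y"
  shows "wt (prefix_flip s y i) = sum_list (take (i - 1) y) + (if y ! (i - 1) = 0 then s - i else 1)"
proof -
  have "take i y = take (i - 1) y @ [y ! (i - 1)]"
    using take_Suc_conv_app_nth[of "i - 1" y] assms(2,3) by simp
  moreover have "y ! (i - 1) \<in> {0,1}" using assms by (simp add: subset_iff)
  ultimately show ?thesis by (auto simp: wt_def prefix_flip_def sum_list_replicate)
qed

lemma wt_prefix_flip_bounds:
  assumes "set y \<subseteq> {0,1}" "length y = s - 1" "1 \<le> i" "i < s"
  shows "wt (prefix_flip s y i) \<in> {1..<s}"
proof -
  have "sum_list (take (i - 1) y) \<le> i - 1"
    using sum_list_take_bin_bounds(2)[OF assms(1), of 0 "i - 1"] by simp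
  moreover have "i \<le> length y" using assms(2,4) by linarith
  ultimately show ?thesis using assms(3,4) by (auto simp: wt_prefix_flip[OF assms(1,3)])
qed

lemma wt_prefix_flip_neq:
  assumes "set y \<subseteq> {0,1}" "length y = s - 1" "1 \<le> i" "i < j" "j < s"
  shows "wt (prefix_flip s y i) \<noteq> wt (prefix_flip s y j)"
proof -
  let ?S = "\<lambda>n. sum_list (take n y)"
  have S_i: "?S i = ?S (i - 1) + y ! (i - 1)"
    using take_Suc_conv_app_nth[of "i - 1" y] assms by simp
  have S_between: "?S i \<le> ?S (j - 1)" "?S (j - 1) \<le> ?S i + (j - 1 - i)"
    using sum_list_take_bin_bounds[OF assms(1), of i "j - 1"] assms(4) by simp_all
  have w_i: "wt (prefix_flip s y i) = ?S (i - 1) + (if y ! (i - 1) = 0 then s - i else 1)"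
    and w_j: "wt (prefix_flip s y j) = ?S (j - 1) + (if y ! (j - 1) = 0 then s - j else 1)"
    using wt_prefix_flip[OF assms(1)] assms by simp_all
  have w_j_bounds: "?S (j - 1) + 1 \<le> wt (prefix_flip s y j)" "wt (prefix_flip s y j) \<le> ?S (j - 1) + (s - j)"
    unfolding w_j using assms(5) by auto
  show ?thesis
  proof (cases "y ! (i - 1) = 0")
    case True
    then have "wt (prefix_flip s y i) = ?S i + (s - i)" using w_i S_i by simp
    then show ?thesis using w_j_bounds(2) S_between(2) assms(4,5) by linarith
  next
    case False
    moreover have "i - 1 < length y" using assms(2-5) by linarith
    ultimately have "y ! (i - 1) = 1" using assms(1) nth_mem by fastforce
    then have "wt (prefix_flip s y i) = ?S i" using w_i S_i by simp
    then show ?thesis using w_j_bounds(1) S_between(1) by linarith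
  qed
qed

lemma inj_on_wt_prefix_flip:
  assumes "set y \<subseteq> {0,1}" "length y = s - 1"
  shows "inj_on (\<lambda>i. wt (prefix_flip s y i)) {1..<s}"
proof (rule inj_onI)
  fix i j assume "i \<in> {1..<s}" "j \<in> {1..<s}" "wt (prefix_flip s y i) = wt (prefix_flip s y j)"
  then show "i = j"
    using wt_prefix_flip_neq[OF assms, of i j] wt_prefix_flip_neq[OF assms, of j i]
    by (cases i j rule: linorder_cases) auto
qed

lemma wt_prefix_flip_image:
  assumes "set y \<subseteq> {0,1}" "length y = s - 1"
  shows "(\<lambda>i. wt (prefix_flip s y i)) ` {1..<s} = {1..<s}"
  using wt_prefix_flip_bounds[OF assms] card_image[OF inj_on_wt_prefix_flip[OF assms]]
  by (intro card_subset_eq) auto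

lemma ex1_wt_mem_Aset:
  assumes "y \<in> binvecs (s - 1)" "0 < k" "k < s"
  shows "\<exists>!eps. eps \<in> binvecs s \<and> wt eps = k \<and> y \<in> Aset eps"
proof -
  have bin: "set y \<subseteq> {0,1}" and len: "length y = s - 1" using assms(1) by (auto simp: binvecs_def)
  have "k \<in> {1..<s}" using assms(2,3) by simp
  then have "k \<in> (\<lambda>i. wt (prefix_flip s y i)) ` {1..<s}"
    unfolding wt_prefix_flip_image[OF bin len] .
  then obtain i where i: "i \<in> {1..<s}" and k: "wt (prefix_flip s y i) = k" by blast
  let ?eps = "prefix_flip s y i"
  have eps: "?eps \<in> binvecs s" using i len by (intro prefix_flip_in_binvecs[OF bin]) auto
  show ?thesis
  proof (rule ex1I)
    show "?eps \<in> binvecs s \<and> wt ?eps = k \<and> y \<in> Aset ?eps"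
      using eps k i assms by (auto simp: mem_Aset_iff_prefix_flip)
  next
    fix gam assume gam: "gam \<in> binvecs s \<and> wt gam = k \<and> y \<in> Aset gam"
    then obtain j where j: "j \<in> {1..<s}" "gam = prefix_flip s y j"
      using assms by (auto simp: mem_Aset_iff_prefix_flip)
    then have "j = i" using inj_on_wt_prefix_flip[OF bin len] i k gam by (auto dest: inj_onD)
    then show "gam = ?eps" using j by simp
  qed
qed

lemma Xset_subset_binvecs: "Xset d s k \<subseteq> binvecs (d - s)"
  by (auto simp: Xset_def)

lemma drop_in_binvecs: "x \<in> binvecs n \<Longrightarrow> drop m x \<in> binvecs (n - m)"
  by (auto simp: binvecs_def dest: in_set_dropD)

theorem corollary1:
  fixes d s k :: nat
  assumes "even d" and "d > 0" and "s > 0" and "2 * s \<le> d"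
    and "1 \<le> k" and "k \<le> s - 1"
  shows "(\<Union>eps \<in> {eps \<in> binvecs s. wt eps = k}. Bset d s eps) = Xset d s k
     \<and> (\<forall>eps \<in> {eps \<in> binvecs s. wt eps = k}. \<forall>gam \<in> {eps \<in> binvecs s. wt eps = k}.
          eps \<noteq> gam \<longrightarrow> Bset d s eps \<inter> Bset d s gam = {})"
proof -
  let ?tail = "drop (d - 2 * s + 1)"
  have "d - s - (d - 2 * s + 1) = s - 1" using assms(3,4) by linarith
  then have tail_bin: "?tail x \<in> binvecs (s - 1)" if "x \<in> Xset d s k" for x
    using drop_in_binvecs[OF subsetD[OF Xset_subset_binvecs that]] by metis
  have Bset_eq: "Bset d s eps = {x \<in> Xset d s k. ?tail x \<in> Aset eps}" if "wt eps = k" for eps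
    using that by (simp add: Bset_def)
  have unique: "\<exists>!eps. eps \<in> binvecs s \<and> wt eps = k \<and> ?tail x \<in> Aset eps"
    if "x \<in> Xset d s k" for x
    using ex1_wt_mem_Aset[OF tail_bin[OF that]] assms(5,6) by simp
  have "(\<Union>eps \<in> {eps \<in> binvecs s. wt eps = k}. Bset d s eps) = Xset d s k"
    using Bset_eq unique[THEN ex1_implies_ex] by auto
  moreover have "Bset d s eps \<inter> Bset d s gam = {}"
    if "eps \<in> {eps \<in> binvecs s. wt eps = k}" "gam \<in> {eps \<in> binvecs s. wt eps = k}" "eps \<noteq> gam"
    for eps gam
    using that unique Bset_eq by auto
  ultimately show ?thesis by blast
qed

end
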